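(* Let $d\ge7$ be odd and let $\pi^{(n)}$ denote $\tau^{(n)}$ for all $n\ge6$, or $\sigma^{(n)}$ for all $n\ge8$ (with $d-1$ in the allowed range). Write $\Omega^{(n)}=\Omega_{\pi^{(n)}}$, $Q^{(n)}=Q_{\pi^{(n)}}$. Then $O(Q^{(d)})$ is isomorphic to $\mathrm{Sp}(\overline{\Omega}^{(d-1)},\mathbb{Z}/2\mathbb{Z})$ if $d\equiv1\pmod4$, and to a semidirect product $O(Q^{(d-1)})\ltimes(\mathbb{Z}/2\mathbb{Z})^{d-1}$ if $d\equiv3\pmod4$.
   Context: $\tau^{(n)}$ has alphabet $\{1,\dots,n\}$, top row $1,2,\dots,n$, bottom row $n,n-1,\dots,6,3,2,5,4,1$; $\sigma^{(n)}$ has top row $1,\dots,n$, bottom row $n,n-1,\dots,8,3,2,7,6,5,4,1$ (rows list letters in order of $\pi_{\mathrm t}$, $\pi_{\mathrm b}$). $(\Omega_\pi)_{\alpha\beta}=+1$ if $\pi_{\mathrm t}(\alpha)<\pi_{\mathrm t}(\beta)$ and $\pi_{\mathrm b}(\alpha)>\pi_{\mathrm b}(\beta)$, $-1$ if the reverse inequalities hold, $0$ otherwise. Bar denotes reduction mod 2; $\mathrm{Sp}(\overline{\Omega},\mathbb{Z}/2\mathbb{Z})=\{S:S\overline{\Omega}S^{\intercal}=\overline{\Omega}\}$. $Q_\pi(u)=\sum_{\pi_{\mathrm t}(\alpha)<\pi_{\mathrm t}(\beta)}u_\alpha(\Omega_\pi)_{\alpha\beta}u_\beta+\sum_\alpha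 u_\alpha\bmod2$ on $(\mathbb{Z}/2\mathbb{Z})^{\mathcal{A}}$; $O(Q_\pi)$ is the group of invertible linear maps of $(\mathbb{Z}/2\mathbb{Z})^{\mathcal{A}}$ (row action) preserving $Q_\pi$. *)

theory Defs
  imports "HOL-Library.Z2" "HOL-Algebra.Bij"
begin

datatype family = Tau | Sigma

definition top_row :: "nat \<Rightarrow> nat list" where
  "top_row n = [1..<n+1]"

definition bot_row :: "family \<Rightarrow> nat \<Rightarrow> nat list" where
  "bot_row f n = (case f of
      Tau \<Rightarrow> rev [6..<n+1] @ [3,2,5,4,1]
    | Sigma \<Rightarrow> rev [8..<n+1] @ [3,2,7,6,5,4,1])"

definition fam_min :: "family \<Rightarrow> nat" where
  "fam_min f = (case f of Tau \<Rightarrow> 6 | Sigma \<Rightarrow> 8)"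

definition pos :: "nat list \<Rightarrow> nat \<Rightarrow> nat" where
  "pos L a = Suc (LEAST i. i < length L \<and> L ! i = a)"

definition pi_t :: "nat \<Rightarrow> nat \<Rightarrow> nat" where
  "pi_t n a = pos (top_row n) a"

definition pi_b :: "family \<Rightarrow> nat \<Rightarrow> nat \<Rightarrow> nat" where
  "pi_b f n a = pos (bot_row f n) a"

definition Omega :: "family \<Rightarrow> nat \<Rightarrow> nat \<Rightarrow> nat \<Rightarrow> int" where
  "Omega f n a b =
     (if pi_t n a < pi_t n b \<and> pi_b f n a > pi_b f n b then 1
      else if pi_t n a > pi_t n b \<and> pi_b f n a < pi_b f n b then -1
      else 0)"

definition vecs :: "nat \<Rightarrow> (nat \<Rightarrow> bit) set" where
  "vecs n = {u. \<forall>i. i \<notin> {1..n} \<longrightarrow> u i = 0}"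

definition mats :: "nat \<Rightarrow> (nat \<Rightarrow> nat \<Rightarrow> bit) set" where
  "mats n = {M. \<forall>i j. i \<notin> {1..n} \<or> j \<notin> {1..n} \<longrightarrow> M i j = 0}"

definition mat_mult :: "nat \<Rightarrow> (nat \<Rightarrow> nat \<Rightarrow> bit) \<Rightarrow> (nat \<Rightarrow> nat \<Rightarrow> bit) \<Rightarrow> (nat \<Rightarrow> nat \<Rightarrow> bit)" where
  "mat_mult n A B = (\<lambda>i j. \<Sum>k\<in>{1..n}. A i k * B k j)"

definition mat_id :: "nat \<Rightarrow> nat \<Rightarrow> nat \<Rightarrow> bit" where
  "mat_id n = (\<lambda>i j. if i = j \<and> i \<in> {1..n} then 1 else 0)"

definition mat_transpose :: "(nat \<Rightarrow> nat \<Rightarrow> bit) \<Rightarrow> (nat \<Rightarrow> nat \<Rightarrow> bit)" where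
  "mat_transpose A = (\<lambda>i j. A j i)"

definition mat_invertible :: "nat \<Rightarrow> (nat \<Rightarrow> nat \<Rightarrow> bit) \<Rightarrow> bool" where
  "mat_invertible n A \<longleftrightarrow> (\<exists>B\<in>mats n. mat_mult n A B = mat_id n \<and> mat_mult n B A = mat_id n)"

definition vec_mat :: "nat \<Rightarrow> (nat \<Rightarrow> bit) \<Rightarrow> (nat \<Rightarrow> nat \<Rightarrow> bit) \<Rightarrow> (nat \<Rightarrow> bit)" where
  "vec_mat n u M = (\<lambda>j. \<Sum>i\<in>{1..n}. u i * M i j)"

definition OmegaBar :: "family \<Rightarrow> nat \<Rightarrow> nat \<Rightarrow> nat \<Rightarrow> bit" where
  "OmegaBar f n a b = (if a \<in> {1..n} \<and> b \<in> {1..n} then of_int (Omega f n a b) else 0)"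

definition Qform :: "family \<Rightarrow> nat \<Rightarrow> (nat \<Rightarrow> bit) \<Rightarrow> bit" where
  "Qform f n u =
     (\<Sum>a\<in>{1..n}. \<Sum>b\<in>{1..n}.
        if pi_t n a < pi_t n b then u a * of_int (Omega f n a b) * u b else 0)
     + (\<Sum>a\<in>{1..n}. u a)"

definition O_group :: "family \<Rightarrow> nat \<Rightarrow> (nat \<Rightarrow> nat \<Rightarrow> bit) monoid" where
  "O_group f n =
     \<lparr>carrier = {M \<in> mats n. mat_invertible n M \<and>
                   (\<forall>u\<in>vecs n. Qform f n (vec_mat n u M) = Qform f n u)},
      mult = mat_mult n,
      one = mat_id n\<rparr>"

definition Sp_group :: "family \<Rightarrow> nat \<Rightarrow> (nat \<Rightarrow> nat \<Rightarrow> bit) monoid" where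
  "Sp_group f n =
     \<lparr>carrier = {S \<in> mats n. mat_invertible n S \<and>
                   mat_mult n (mat_mult n S (OmegaBar f n)) (mat_transpose S) = OmegaBar f n},
      mult = mat_mult n,
      one = mat_id n\<rparr>"

definition vec_group :: "nat \<Rightarrow> (nat \<Rightarrow> bit) monoid" where
  "vec_group n = \<lparr>carrier = vecs n, mult = (\<lambda>u v i. u i + v i), one = (\<lambda>i. 0)\<rparr>"

definition semidirect_prod ::
  "('n, 'c) monoid_scheme \<Rightarrow> ('h, 'd) monoid_scheme \<Rightarrow> ('h \<Rightarrow> 'n \<Rightarrow> 'n) \<Rightarrow> ('n \<times> 'h) monoid" where
  "semidirect_prod N H \<phi> =
     \<lparr>carrier = carrier N \<times> carrier H,
      mult = (\<lambda>(n1, h1) (n2, h2). (n1 \<otimes>\<^bsub>N\<^esub> \<phi> h1 n2, h1 \<otimes>\<^bsub>H\<^esub> h2)),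
      one = (\<one>\<^bsub>N\<^esub>, \<one>\<^bsub>H\<^esub>)\<rparr>"

end

theory Submission
  imports Defs
begin

text \<open>
  Reduced mod 2, the matrix Omega of tau or sigma is J - I - E, where E is the adjacency matrix of
  the complete bipartite graph between {2,3} and {4,5} (tau) or {4,...,7} (sigma).  For odd d
  every row of J - I - E has even sum, so the all-ones vector 1 lies in the radical of the polar
  form of Q; on the first d - 1 coordinates the polar form is nondegenerate, so the radical is
  exactly the span of 1 and every isometry of Q fixes 1.  An isometry is determined by the map it
  induces on the quotient by 1, which preserves the polar form, together with its last column, and
  the last column is constrained by Q only through Q(1) = d(d+1)/2 mod 2.  If d = 1 mod 4 then
  Q(1) = 1, the last column is forced by the induced map, and passing to the quotient is an
  isomorphism onto Sp.  If d = 3 mod 4 then Q(1) = 0, the induced map preserves Q on the first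
  d - 1 coordinates, the last column is arbitrary, and the pair (last column, induced map)
  realises O(Q) as a semidirect product.
\<close>

\<comment> \<open>Keep bit arithmetic in ring form: the XOR/AND rewriting of Z2 defeats algebraic normalisation.\<close>
declare add_bit_eq_xor[simp del] mult_bit_eq_and[simp del]

lemma bit_add_self [simp]: "x + x = (0::bit)"
  by (cases x) simp_all

lemma bit_add_cancel_left [simp]: "x + (x + y) = (y::bit)"
  by (cases x) simp_all

lemma bit_add_eq_0_iff: "x + y = 0 \<longleftrightarrow> x = (y::bit)"
  by (cases x; cases y) simp_all

lemma of_nat_bit: "(of_nat k :: bit) = (if even k then 0 else 1)"
  by (induction k) auto

lemma if_mult_bit [simp]: "(if P then 1 else 0) * x = (if P then x else (0::bit))"
  by simp

section \<open>Vectors and matrices over Z/2Z\<close>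

definition unit_vec :: "nat \<Rightarrow> nat \<Rightarrow> bit" where
  "unit_vec i = (\<lambda>j. if j = i then 1 else 0)"

definition ones_vec :: "nat \<Rightarrow> nat \<Rightarrow> bit" where
  "ones_vec n = (\<lambda>i. if i \<in> {1..n} then 1 else 0)"

lemma zero_vecs: "(\<lambda>i. 0) \<in> vecs n"
  by (simp add: vecs_def)

lemma add_vecs: "u \<in> vecs n \<Longrightarrow> v \<in> vecs n \<Longrightarrow> (\<lambda>i. u i + v i) \<in> vecs n"
  by (simp add: vecs_def)

lemma unit_vec_vecs: "i \<in> {1..n} \<Longrightarrow> unit_vec i \<in> vecs n"
  by (auto simp: unit_vec_def vecs_def)

lemma ones_vec_vecs: "ones_vec n \<in> vecs n"
  by (simp add: ones_vec_def vecs_def)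

lemma vecs_Suc: "u \<in> vecs m \<Longrightarrow> u \<in> vecs (Suc m)"
  by (auto simp: vecs_def)

lemma finite_vecs: "finite (vecs n)"
proof -
  have "vecs n \<subseteq> (\<lambda>S i. if i \<in> S then 1 else 0) ` Pow {1..n}"
  proof
    fix u assume "u \<in> vecs n"
    then have "u = (\<lambda>i. if i \<in> {i\<in>{1..n}. u i = 1} then 1 else 0)"
      by (auto simp: vecs_def fun_eq_iff)
    then show "u \<in> (\<lambda>S i. if i \<in> S then 1 else 0) ` Pow {1..n}" by blast
  qed
  then show ?thesis by (rule finite_subset) simp
qed

lemma mat_mult_mats: "A \<in> mats n \<Longrightarrow> B \<in> mats n \<Longrightarrow> mat_mult n A B \<in> mats n"
  by (auto simp: mat_mult_def mats_def)

lemma mat_id_mats: "mat_id n \<in> mats n"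
  by (simp add: mat_id_def mats_def)

lemma vec_mat_vecs: "A \<in> mats n \<Longrightarrow> vec_mat n u A \<in> vecs n"
  by (simp add: vec_mat_def mats_def vecs_def)

lemma vec_mat_mult: "vec_mat n u (mat_mult n A B) = vec_mat n (vec_mat n u A) B"
  unfolding vec_mat_def mat_mult_def
  by (rule ext) (simp add: sum_distrib_left sum_distrib_right mult_ac, rule sum.swap)

lemma vec_mat_id: "u \<in> vecs n \<Longrightarrow> vec_mat n u (mat_id n) = u"
  unfolding vec_mat_def mat_id_def vecs_def
  by (rule ext) (auto simp: if_distrib cong: if_cong)

lemma vec_mat_unit: "i \<in> {1..n} \<Longrightarrow> vec_mat n (unit_vec i) A = (\<lambda>j. A i j)"
  by (simp add: vec_mat_def unit_vec_def)

lemma vec_mat_add: "vec_mat n (\<lambda>i. u i + v i) A = (\<lambda>j. vec_mat n u A j + vec_mat n v A j)"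
  by (simp add: vec_mat_def sum.distrib algebra_simps)

lemma vec_mat_smult: "vec_mat n (\<lambda>i. c * u i) A = (\<lambda>j. c * vec_mat n u A j)"
  by (simp add: vec_mat_def sum_distrib_left mult_ac)

lemma vec_mat_zero: "vec_mat n (\<lambda>i. 0) A = (\<lambda>j. 0)"
  by (simp add: vec_mat_def)

lemma mats_eqI:
  assumes "A \<in> mats n" "B \<in> mats n" "\<And>u. u \<in> vecs n \<Longrightarrow> vec_mat n u A = vec_mat n u B"
  shows "A = B"
proof (intro ext)
  fix i j
  show "A i j = B i j"
  proof (cases "i \<in> {1..n}")
    case True
    then show ?thesis using assms(3)[OF unit_vec_vecs[OF True]] by (metis vec_mat_unit)
  next
    case False
    then show ?thesis using assms(1,2) by (simp add: mats_def)
  qed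
qed

lemma invertible_vec_mat_cancel:
  assumes "mat_invertible n A" "u \<in> vecs n" "v \<in> vecs n" "vec_mat n u A = vec_mat n v A"
  shows "u = v"
proof -
  obtain B where B: "mat_mult n A B = mat_id n"
    using assms(1) unfolding mat_invertible_def by blast
  have "vec_mat n u (mat_mult n A B) = vec_mat n v (mat_mult n A B)"
    by (simp only: vec_mat_mult assms(4))
  then show ?thesis using assms(2,3) by (simp add: B vec_mat_id)
qed

lemma invertible_vec_mat_surj:
  assumes "mat_invertible n A" "y \<in> vecs n"
  obtains x where "x \<in> vecs n" "vec_mat n x A = y"
proof -
  obtain B where B: "B \<in> mats n" "mat_mult n B A = mat_id n"
    using assms(1) unfolding mat_invertible_def by blast
  have "vec_mat n (vec_mat n y B) A = y"
    using vec_mat_mult[of n y B A] B(2) vec_mat_id[OF assms(2)] by simp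
  then show ?thesis using that vec_mat_vecs[OF B(1)] by blast
qed

lemma mat_invertibleI:
  assumes A: "A \<in> mats n"
    and ker: "\<And>u. u \<in> vecs n \<Longrightarrow> vec_mat n u A = (\<lambda>j. 0) \<Longrightarrow> u = (\<lambda>j. 0)"
  shows "mat_invertible n A"
proof -
  let ?F = "\<lambda>u. vec_mat n u A"
  have "inj_on ?F (vecs n)"
  proof (rule inj_onI)
    fix u v assume u: "u \<in> vecs n" and v: "v \<in> vecs n" and "?F u = ?F v"
    then have "?F (\<lambda>i. u i + v i) = (\<lambda>j. 0)" by (simp add: vec_mat_add)
    then have "(\<lambda>i. u i + v i) = (\<lambda>j. 0)" using ker add_vecs[OF u v] by blast
    then show "u = v" by (simp add: fun_eq_iff bit_add_eq_0_iff)
  qed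
  moreover have "?F ` vecs n \<subseteq> vecs n" using vec_mat_vecs[OF A] by blast
  ultimately have surj: "?F ` vecs n = vecs n"
    using endo_inj_surj[OF finite_vecs] by blast
  define g where "g i = (SOME w. w \<in> vecs n \<and> ?F w = unit_vec i)" for i
  have g: "g i \<in> vecs n \<and> ?F (g i) = unit_vec i" if "i \<in> {1..n}" for i
  proof -
    have "\<exists>w. w \<in> vecs n \<and> ?F w = unit_vec i"
      using unit_vec_vecs[OF that] surj by (metis imageE)
    then show ?thesis unfolding g_def by (rule someI_ex)
  qed
  define B where "B = (\<lambda>i j. if i \<in> {1..n} then g i j else 0)"
  have B: "B \<in> mats n" using g by (auto simp: B_def mats_def vecs_def)
  have BA: "mat_mult n B A = mat_id n"
  proof (intro ext)
    fix i j
    show "mat_mult n B A i j = mat_id n i j"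
    proof (cases "i \<in> {1..n}")
      case True
      then have "mat_mult n B A i j = ?F (g i) j"
        by (simp add: mat_mult_def vec_mat_def B_def)
      then show ?thesis using g[OF True] True by (simp add: unit_vec_def mat_id_def)
    qed (auto simp: mat_mult_def mat_id_def B_def)
  qed
  have AB: "mat_mult n A B = mat_id n"
  proof (rule mats_eqI[OF mat_mult_mats[OF A B] mat_id_mats])
    fix u assume u: "u \<in> vecs n"
    have "?F (vec_mat n u (mat_mult n A B)) = vec_mat n (vec_mat n u A) (mat_mult n B A)"
      by (simp only: vec_mat_mult)
    also have "\<dots> = ?F u" using BA vec_mat_id[OF vec_mat_vecs[OF A]] by simp
    finally have "vec_mat n u (mat_mult n A B) = u"
      using inj_onD[OF \<open>inj_on ?F (vecs n)\<close>] u vec_mat_vecs[OF mat_mult_mats[OF A B]] by blast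
    then show "vec_mat n u (mat_mult n A B) = vec_mat n u (mat_id n)"
      using vec_mat_id[OF u] by simp
  qed
  show ?thesis unfolding mat_invertible_def using B AB BA by blast
qed

lemma additive_eq_sum_unit:
  assumes add: "\<And>x y. x \<in> vecs n \<Longrightarrow> y \<in> vecs n \<Longrightarrow> g (\<lambda>i. x i + y i) = g x + (g y :: bit)"
    and x: "x \<in> vecs n"
  shows "g x = (\<Sum>i\<in>{1..n}. x i * g (unit_vec i))"
proof -
  have g0: "g (\<lambda>i. 0) = 0"
    using add[OF zero_vecs zero_vecs] by simp
  have "g x = (\<Sum>i\<in>{1..k}. x i * g (unit_vec i))"
    if "k \<le> n" "x \<in> vecs n" "\<forall>i>k. x i = 0" for k x
    using that
  proof (induction k arbitrary: x)
    case 0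
    have "x i = 0" for i using 0 by (cases "i = 0") (auto simp: vecs_def)
    then have "x = (\<lambda>i. 0)" by blast
    then show ?case using g0 by simp
  next
    case (Suc k)
    let ?e = "\<lambda>i. x (Suc k) * unit_vec (Suc k) i"
    have x': "x(Suc k := 0) \<in> vecs n" using Suc.prems by (auto simp: vecs_def)
    have e: "?e \<in> vecs n" using Suc.prems by (auto simp: vecs_def unit_vec_def)
    have "x = (\<lambda>i. (x(Suc k := 0)) i + ?e i)" by (auto simp: fun_eq_iff unit_vec_def)
    then have "g x = g (x(Suc k := 0)) + g ?e" using add[OF x' e] by simp
    also have "g (x(Suc k := 0)) = (\<Sum>i\<in>{1..k}. (x(Suc k := 0)) i * g (unit_vec i))"
    proof (rule Suc.IH[OF _ x'])
      show "\<forall>i>k. (x(Suc k := 0)) i = 0" using Suc.prems(3) by (simp add: Suc_lessI)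
    qed (use Suc.prems(1) in simp)
    also have "\<dots> = (\<Sum>i\<in>{1..k}. x i * g (unit_vec i))"
      by (intro sum.cong) auto
    also have "g ?e = x (Suc k) * g (unit_vec (Suc k))"
      by (cases "x (Suc k)") (simp_all add: g0)
    finally show ?case by simp
  qed
  then show ?thesis using x by (simp add: vecs_def)
qed

section \<open>The quadratic form and its polar form\<close>

definition polar_form :: "(nat \<Rightarrow> nat \<Rightarrow> bit) \<Rightarrow> nat \<Rightarrow> (nat \<Rightarrow> bit) \<Rightarrow> (nat \<Rightarrow> bit) \<Rightarrow> bit" where
  "polar_form A n u v = (\<Sum>a\<in>{1..n}. \<Sum>b\<in>{1..n}. u a * A a b * v b)"

definition quad_form :: "(nat \<Rightarrow> nat \<Rightarrow> bit) \<Rightarrow> nat \<Rightarrow> (nat \<Rightarrow> bit) \<Rightarrow> bit" where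
  "quad_form A n u =
     (\<Sum>a\<in>{1..n}. \<Sum>b\<in>{1..n}. if a < b then u a * A a b * u b else 0) + (\<Sum>a\<in>{1..n}. u a)"

lemma polar_form_add_left:
  "polar_form A n (\<lambda>i. u i + v i) w = polar_form A n u w + polar_form A n v w"
  by (simp add: polar_form_def sum.distrib algebra_simps)

lemma polar_form_add_right:
  "polar_form A n w (\<lambda>i. u i + v i) = polar_form A n w u + polar_form A n w v"
  by (simp add: polar_form_def sum.distrib algebra_simps)

lemma polar_form_smult_left: "polar_form A n (\<lambda>i. c * u i) w = c * polar_form A n u w"
  by (simp add: polar_form_def sum_distrib_left mult_ac)

lemma polar_form_unit_right:
  "b \<in> {1..n} \<Longrightarrow> polar_form A n u (unit_vec b) = (\<Sum>a\<in>{1..n}. u a * A a b)"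
  by (simp add: polar_form_def unit_vec_def if_distrib cong: if_cong)

lemma polar_form_unit_unit:
  "a \<in> {1..n} \<Longrightarrow> b \<in> {1..n} \<Longrightarrow> polar_form A n (unit_vec a) (unit_vec b) = A a b"
  by (subst polar_form_unit_right) (auto simp: unit_vec_def)

lemma polar_form_Suc:
  "u \<in> vecs m \<Longrightarrow> v \<in> vecs m \<Longrightarrow> polar_form A (Suc m) u v = polar_form A m u v"
  by (simp add: polar_form_def vecs_def sum.distrib)

lemma quad_form_Suc: "u \<in> vecs m \<Longrightarrow> quad_form A (Suc m) u = quad_form A m u"
  by (simp add: quad_form_def vecs_def sum.distrib cong: if_cong)

lemma quad_form_smult: "quad_form A n (\<lambda>i. c * u i) = c * quad_form A n u"
  by (cases c) (simp_all add: quad_form_def cong: if_cong)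

lemma quad_form_unit: "i \<in> {1..n} \<Longrightarrow> quad_form A n (unit_vec i) = 1"
proof -
  have "(\<Sum>a\<in>{1..n}. \<Sum>b\<in>{1..n}. if a < b then unit_vec i a * A a b * unit_vec i b else 0) = 0"
    by (intro sum.neutral ballI) (simp add: unit_vec_def)
  moreover have "i \<in> {1..n} \<Longrightarrow> (\<Sum>a\<in>{1..n}. unit_vec i a) = 1"
    by (simp add: unit_vec_def)
  ultimately show "i \<in> {1..n} \<Longrightarrow> ?thesis" by (simp only: quad_form_def) simp
qed

lemma polar_form_cong:
  "(\<And>a b. a \<in> {1..n} \<Longrightarrow> b \<in> {1..n} \<Longrightarrow> A a b = B a b) \<Longrightarrow> polar_form A n = polar_form B n"
  by (intro ext) (auto simp: polar_form_def intro!: sum.cong)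

lemma double_sum_symmetrize:
  fixes X :: "nat \<Rightarrow> nat \<Rightarrow> 'a::comm_monoid_add"
  assumes "\<And>a. X a a = 0"
  shows "(\<Sum>a\<in>I. \<Sum>b\<in>I. X a b) = (\<Sum>a\<in>I. \<Sum>b\<in>I. if a < b then X a b + X b a else 0)"
proof -
  have "(\<Sum>a\<in>I. \<Sum>b\<in>I. X a b)
      = (\<Sum>a\<in>I. \<Sum>b\<in>I. (if a < b then X a b else 0) + (if b < a then X a b else 0))"
    by (intro sum.cong refl) (use assms in \<open>auto dest: not_less_iff_gr_or_eq[THEN iffD1]\<close>)
  also have "\<dots> = (\<Sum>a\<in>I. \<Sum>b\<in>I. if a < b then X a b else 0) + (\<Sum>a\<in>I. \<Sum>b\<in>I. if b < a then X a b else 0)"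
    by (simp add: sum.distrib)
  also have "(\<Sum>a\<in>I. \<Sum>b\<in>I. if b < a then X a b else 0) = (\<Sum>b\<in>I. \<Sum>a\<in>I. if b < a then X a b else 0)"
    by (rule sum.swap)
  also have "(\<Sum>a\<in>I. \<Sum>b\<in>I. if a < b then X a b else 0) + \<dots>
      = (\<Sum>a\<in>I. \<Sum>b\<in>I. if a < b then X a b + X b a else 0)"
    by (simp add: sum.distrib[symmetric] if_distrib cong: if_cong)
  finally show ?thesis .
qed

locale alternating_coeffs =
  fixes A :: "nat \<Rightarrow> nat \<Rightarrow> bit"
  assumes coeff_sym: "A a b = A b a"
    and coeff_diag: "A a a = 0"
begin

lemma polar_form_sym: "polar_form A n u v = polar_form A n v u"
  unfolding polar_form_def by (subst sum.swap) (simp add: coeff_sym mult_ac)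

lemma quad_form_add:
  "quad_form A n (\<lambda>i. u i + v i) = quad_form A n u + quad_form A n v + polar_form A n u v"
proof -
  have polar: "polar_form A n u v
      = (\<Sum>a\<in>{1..n}. \<Sum>b\<in>{1..n}. if a < b then u a * A a b * v b + v a * A a b * u b else 0)"
  proof -
    have swap: "u b * A b a * v a = v a * A a b * u b" for a b
      by (simp add: coeff_sym[of b a] mult_ac)
    have "polar_form A n u v
        = (\<Sum>a\<in>{1..n}. \<Sum>b\<in>{1..n}. if a < b then u a * A a b * v b + u b * A b a * v a else 0)"
      unfolding polar_form_def by (rule double_sum_symmetrize) (simp add: coeff_diag)
    then show ?thesis by (simp only: swap)
  qed
  have "(\<Sum>a\<in>{1..n}. \<Sum>b\<in>{1..n}. if a < b then (u a + v a) * A a b * (u b + v b) else 0)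
     = (\<Sum>a\<in>{1..n}. \<Sum>b\<in>{1..n}. if a < b then u a * A a b * u b else 0)
     + (\<Sum>a\<in>{1..n}. \<Sum>b\<in>{1..n}. if a < b then v a * A a b * v b else 0)
     + (\<Sum>a\<in>{1..n}. \<Sum>b\<in>{1..n}. if a < b then u a * A a b * v b + v a * A a b * u b else 0)"
    unfolding sum.distrib[symmetric] by (intro sum.cong refl) (auto simp: algebra_simps)
  then show ?thesis unfolding quad_form_def polar by (simp add: sum.distrib algebra_simps)
qed

end

section \<open>Orthogonal and symplectic groups\<close>

definition orth_group :: "(nat \<Rightarrow> nat \<Rightarrow> bit) \<Rightarrow> nat \<Rightarrow> (nat \<Rightarrow> nat \<Rightarrow> bit) monoid" where
  "orth_group A n =
     \<lparr>carrier = {M \<in> mats n. mat_invertible n M \<and>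
                   (\<forall>u\<in>vecs n. quad_form A n (vec_mat n u M) = quad_form A n u)},
      mult = mat_mult n, one = mat_id n\<rparr>"

definition symp_group :: "(nat \<Rightarrow> nat \<Rightarrow> bit) \<Rightarrow> nat \<Rightarrow> (nat \<Rightarrow> nat \<Rightarrow> bit) monoid" where
  "symp_group A n =
     \<lparr>carrier = {S \<in> mats n. mat_invertible n S \<and>
                   (\<forall>u\<in>vecs n. \<forall>v\<in>vecs n.
                      polar_form A n (vec_mat n u S) (vec_mat n v S) = polar_form A n u v)},
      mult = mat_mult n, one = mat_id n\<rparr>"

lemma orth_groupD:
  assumes "M \<in> carrier (orth_group A n)"
  shows "M \<in> mats n" "mat_invertible n M"
    and "u \<in> vecs n \<Longrightarrow> quad_form A n (vec_mat n u M) = quad_form A n u"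
  using assms by (auto simp: orth_group_def)

lemma orth_group_inverse:
  assumes M: "M \<in> carrier (orth_group A n)"
  obtains M' where "M' \<in> carrier (orth_group A n)"
    "mat_mult n M M' = mat_id n" "mat_mult n M' M = mat_id n"
proof -
  obtain B where B: "B \<in> mats n" "mat_mult n M B = mat_id n" "mat_mult n B M = mat_id n"
    using orth_groupD(2)[OF M] unfolding mat_invertible_def by blast
  have "quad_form A n (vec_mat n u B) = quad_form A n u" if u: "u \<in> vecs n" for u
  proof -
    have "quad_form A n (vec_mat n u B) = quad_form A n (vec_mat n (vec_mat n u B) M)"
      using orth_groupD(3)[OF M vec_mat_vecs[OF B(1)]] by simp
    also have "vec_mat n (vec_mat n u B) M = u"
      using vec_mat_mult[of n u B M] B(3) vec_mat_id[OF u] by simp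
    finally show ?thesis .
  qed
  moreover have "mat_invertible n B"
    unfolding mat_invertible_def using orth_groupD(1)[OF M] B by blast
  ultimately have "B \<in> carrier (orth_group A n)" using B(1) by (simp add: orth_group_def)
  then show ?thesis using that B by blast
qed

lemma (in alternating_coeffs) orth_preserves_polar:
  assumes M: "M \<in> carrier (orth_group A n)" and u: "u \<in> vecs n" and v: "v \<in> vecs n"
  shows "polar_form A n (vec_mat n u M) (vec_mat n v M) = polar_form A n u v"
  using orth_groupD(3)[OF M add_vecs[OF u v]] orth_groupD(3)[OF M u] orth_groupD(3)[OF M v]
  by (simp add: vec_mat_add quad_form_add)

lemma congruence_entry:
  assumes "i \<in> {1..n}" "j \<in> {1..n}"
  shows "mat_mult n (mat_mult n S A) (mat_transpose S) i j
       = polar_form A n (vec_mat n (unit_vec i) S) (vec_mat n (unit_vec j) S)"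
proof -
  have "mat_mult n (mat_mult n S A) (mat_transpose S) i j
      = (\<Sum>b\<in>{1..n}. \<Sum>a\<in>{1..n}. S i a * A a b * S j b)"
    by (simp add: mat_mult_def mat_transpose_def sum_distrib_right)
  also have "\<dots> = polar_form A n (\<lambda>a. S i a) (\<lambda>b. S j b)"
    unfolding polar_form_def by (rule sum.swap)
  finally show ?thesis using assms by (simp add: vec_mat_unit)
qed

lemma polar_form_extend:
  assumes units: "\<And>i j. i \<in> {1..n} \<Longrightarrow> j \<in> {1..n} \<Longrightarrow>
      polar_form A n (vec_mat n (unit_vec i) S) (vec_mat n (unit_vec j) S) = A i j"
    and u: "u \<in> vecs n" and v: "v \<in> vecs n"
  shows "polar_form A n (vec_mat n u S) (vec_mat n v S) = polar_form A n u v"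
proof -
  have row: "polar_form A n (vec_mat n (unit_vec i) S) (vec_mat n v S) = polar_form A n (unit_vec i) v"
    if i: "i \<in> {1..n}" for i
  proof -
    define h where "h y = polar_form A n (vec_mat n (unit_vec i) S) (vec_mat n y S)
      + polar_form A n (unit_vec i) y" for y
    have "h v = (\<Sum>j\<in>{1..n}. v j * h (unit_vec j))"
      by (rule additive_eq_sum_unit[OF _ v]) (simp add: h_def vec_mat_add polar_form_add_right algebra_simps)
    also have "\<dots> = 0"
      using units[OF i] i by (intro sum.neutral ballI) (simp add: h_def polar_form_unit_unit)
    finally show ?thesis by (simp add: h_def bit_add_eq_0_iff)
  qed
  define h where "h x = polar_form A n (vec_mat n x S) (vec_mat n v S) + polar_form A n x v" for x
  have "h u = (\<Sum>i\<in>{1..n}. u i * h (unit_vec i))"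
    by (rule additive_eq_sum_unit[OF _ u]) (simp add: h_def vec_mat_add polar_form_add_left algebra_simps)
  also have "\<dots> = 0" using row by (simp add: h_def)
  finally show ?thesis by (simp add: h_def bit_add_eq_0_iff)
qed

lemma congruence_iff_isometry:
  assumes S: "S \<in> mats n" and A: "A \<in> mats n"
  shows "mat_mult n (mat_mult n S A) (mat_transpose S) = A \<longleftrightarrow>
    (\<forall>u\<in>vecs n. \<forall>v\<in>vecs n. polar_form A n (vec_mat n u S) (vec_mat n v S) = polar_form A n u v)"
proof
  assume "mat_mult n (mat_mult n S A) (mat_transpose S) = A"
  then show "\<forall>u\<in>vecs n. \<forall>v\<in>vecs n. polar_form A n (vec_mat n u S) (vec_mat n v S) = polar_form A n u v"
    using congruence_entry by (metis polar_form_extend)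
next
  assume iso: "\<forall>u\<in>vecs n. \<forall>v\<in>vecs n. polar_form A n (vec_mat n u S) (vec_mat n v S) = polar_form A n u v"
  show "mat_mult n (mat_mult n S A) (mat_transpose S) = A"
  proof (intro ext)
    fix i j
    show "mat_mult n (mat_mult n S A) (mat_transpose S) i j = A i j"
    proof (cases "i \<in> {1..n} \<and> j \<in> {1..n}")
      case True
      then show ?thesis
        using iso unit_vec_vecs by (simp add: congruence_entry polar_form_unit_unit)
    next
      case False
      then show ?thesis using S A by (auto simp: mat_mult_def mat_transpose_def mats_def)
    qed
  qed
qed

definition mat_vec :: "nat \<Rightarrow> (nat \<Rightarrow> nat \<Rightarrow> bit) \<Rightarrow> (nat \<Rightarrow> bit) \<Rightarrow> (nat \<Rightarrow> bit)" where
  "mat_vec n M v = (\<lambda>i. if i \<in> {1..n} then \<Sum>j\<in>{1..n}. M i j * v j else 0)"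

definition col_action :: "nat \<Rightarrow> (nat \<Rightarrow> nat \<Rightarrow> bit) \<Rightarrow> (nat \<Rightarrow> bit) \<Rightarrow> (nat \<Rightarrow> bit)" where
  "col_action n M = restrict (mat_vec n M) (vecs n)"

lemma mat_vec_vecs: "mat_vec n M v \<in> vecs n"
  by (simp add: mat_vec_def vecs_def)

lemma mat_vec_mult: "mat_vec n (mat_mult n M N) v = mat_vec n M (mat_vec n N v)"
proof (rule ext)
  fix i
  show "mat_vec n (mat_mult n M N) v i = mat_vec n M (mat_vec n N v) i"
  proof (cases "i \<in> {1..n}")
    case True
    have "mat_vec n M (mat_vec n N v) i = (\<Sum>k\<in>{1..n}. \<Sum>j\<in>{1..n}. M i k * N k j * v j)"
      using True by (simp add: mat_vec_def sum_distrib_left mult_ac)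
    also have "\<dots> = (\<Sum>j\<in>{1..n}. \<Sum>k\<in>{1..n}. M i k * N k j * v j)" by (rule sum.swap)
    also have "\<dots> = mat_vec n (mat_mult n M N) v i"
      using True by (simp add: mat_vec_def mat_mult_def sum_distrib_right)
    finally show ?thesis by simp
  qed (auto simp: mat_vec_def)
qed

lemma mat_vec_id: "v \<in> vecs n \<Longrightarrow> mat_vec n (mat_id n) v = v"
  by (rule ext) (auto simp: mat_vec_def mat_id_def vecs_def)

lemma mat_vec_add: "mat_vec n M (\<lambda>i. u i + v i) = (\<lambda>i. mat_vec n M u i + mat_vec n M v i)"
  by (rule ext) (simp add: mat_vec_def sum.distrib algebra_simps)

lemma col_action_bij:
  assumes "mat_invertible n M"
  shows "col_action n M \<in> Bij (vecs n)"
proof -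
  obtain N where N: "mat_mult n M N = mat_id n" "mat_mult n N M = mat_id n"
    using assms unfolding mat_invertible_def by blast
  have "bij_betw (mat_vec n M) (vecs n) (vecs n)"
    by (rule bij_betw_byWitness[where f' = "mat_vec n N"])
      (auto simp: mat_vec_vecs mat_vec_id N simp flip: mat_vec_mult)
  then show ?thesis by (simp add: Bij_def col_action_def)
qed

lemma col_action_hom: "col_action n \<in> hom (orth_group A n) (AutoGroup (vec_group n))"
proof -
  have aut: "col_action n M \<in> auto (vec_group n)" if "mat_invertible n M" for M
  proof -
    have "col_action n M \<in> hom (vec_group n) (vec_group n)"
      by (auto simp: hom_def vec_group_def col_action_def mat_vec_vecs mat_vec_add add_vecs)
    then show ?thesis using col_action_bij[OF that] by (simp add: auto_def vec_group_def)
  qed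
  have "col_action n (mat_mult n M N) = compose (vecs n) (col_action n M) (col_action n N)" for M N
    by (rule ext) (simp add: col_action_def compose_def mat_vec_mult mat_vec_vecs)
  then show ?thesis using aut col_action_bij
    by (auto simp: hom_def AutoGroup_def BijGroup_def orth_group_def vec_group_def)
qed

section \<open>Passing to the quotient by the all-ones vector\<close>

text \<open>Every u in (Z/2Z)^(m+1) is uniquely x + t 1 with x supported on {1..m};
  proj_ones m u is this x.\<close>
definition proj_ones :: "nat \<Rightarrow> (nat \<Rightarrow> bit) \<Rightarrow> (nat \<Rightarrow> bit)" where
  "proj_ones m u = (\<lambda>i. if i \<in> {1..m} then u i + u (Suc m) else 0)"

text \<open>The matrix of the map induced on the quotient by the all-ones vector, in the basis given
  by the images of the first m unit vectors.\<close>
definition induced_mat :: "nat \<Rightarrow> (nat \<Rightarrow> nat \<Rightarrow> bit) \<Rightarrow> (nat \<Rightarrow> nat \<Rightarrow> bit)" where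
  "induced_mat m M = (\<lambda>i j. if i \<in> {1..m} \<and> j \<in> {1..m} then M i j + M i (Suc m) else 0)"

definition last_col :: "nat \<Rightarrow> (nat \<Rightarrow> nat \<Rightarrow> bit) \<Rightarrow> (nat \<Rightarrow> bit)" where
  "last_col m M = (\<lambda>i. if i \<in> {1..m} then M i (Suc m) else 0)"

text \<open>The unique matrix with induced matrix S and last column c that fixes the all-ones vector:
  the last row is forced by the column sums.\<close>
definition lift_mat :: "nat \<Rightarrow> (nat \<Rightarrow> nat \<Rightarrow> bit) \<Rightarrow> (nat \<Rightarrow> bit) \<Rightarrow> (nat \<Rightarrow> nat \<Rightarrow> bit)" where
  "lift_mat m S c = (\<lambda>i j.
     if i \<in> {1..m} then (if j \<in> {1..m} then S i j + c i else if j = Suc m then c i else 0)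
     else if i = Suc m then
       (if j \<in> {1..m} then 1 + (\<Sum>k\<in>{1..m}. S k j + c k)
        else if j = Suc m then 1 + (\<Sum>k\<in>{1..m}. c k) else 0)
     else 0)"

lemma proj_ones_vecs: "proj_ones m u \<in> vecs m"
  by (simp add: proj_ones_def vecs_def)

lemma proj_ones_decomp:
  "u \<in> vecs (Suc m) \<Longrightarrow> u = (\<lambda>i. proj_ones m u i + u (Suc m) * ones_vec (Suc m) i)"
  by (rule ext) (auto simp: proj_ones_def ones_vec_def vecs_def algebra_simps le_Suc_eq)

lemma proj_ones_eq:
  "u \<in> vecs (Suc m) \<Longrightarrow> proj_ones m u = (\<lambda>i. u i + u (Suc m) * ones_vec (Suc m) i)"
  by (rule ext) (auto simp: proj_ones_def ones_vec_def vecs_def le_Suc_eq)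

lemma proj_ones_id: "w \<in> vecs m \<Longrightarrow> proj_ones m w = w"
  by (rule ext) (auto simp: proj_ones_def vecs_def)

lemma proj_ones_add_ones: "proj_ones m (\<lambda>i. v i + a * ones_vec (Suc m) i) = proj_ones m v"
  by (rule ext) (auto simp: proj_ones_def ones_vec_def algebra_simps)

lemma induced_mat_mats: "induced_mat m M \<in> mats m"
  by (simp add: induced_mat_def mats_def)

lemma vec_mat_induced_mat:
  assumes "x \<in> vecs m"
  shows "vec_mat m x (induced_mat m M) = proj_ones m (vec_mat (Suc m) x M)"
proof (rule ext)
  fix j
  have "x (Suc m) = 0" using assms by (simp add: vecs_def)
  then show "vec_mat m x (induced_mat m M) j = proj_ones m (vec_mat (Suc m) x M) j"
    by (auto simp: vec_mat_def induced_mat_def proj_ones_def sum.distrib algebra_simps)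
qed

lemma induced_mat_id: "induced_mat m (mat_id (Suc m)) = mat_id m"
  by (auto simp: induced_mat_def mat_id_def fun_eq_iff)

lemma lift_mat_mats: "lift_mat m S c \<in> mats (Suc m)"
  by (auto simp: lift_mat_def mats_def)

lemma induced_lift_mat: "S \<in> mats m \<Longrightarrow> induced_mat m (lift_mat m S c) = S"
  by (auto simp: induced_mat_def lift_mat_def fun_eq_iff mats_def)

lemma last_col_lift_mat: "c \<in> vecs m \<Longrightarrow> last_col m (lift_mat m S c) = c"
  by (auto simp: last_col_def lift_mat_def fun_eq_iff vecs_def)

lemma vec_mat_lift_mat_short:
  assumes S: "S \<in> mats m" and x: "x \<in> vecs m"
  shows "vec_mat (Suc m) x (lift_mat m S c)
       = (\<lambda>j. vec_mat m x S j + (\<Sum>i\<in>{1..m}. x i * c i) * ones_vec (Suc m) j)"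
proof (rule ext)
  fix j
  have "x (Suc m) = 0" using x by (simp add: vecs_def)
  then have "vec_mat (Suc m) x (lift_mat m S c) j = (\<Sum>i\<in>{1..m}. x i * lift_mat m S c i j)"
    by (simp add: vec_mat_def)
  also have "\<dots> = vec_mat m x S j + (\<Sum>i\<in>{1..m}. x i * c i) * ones_vec (Suc m) j"
  proof (cases "j \<in> {1..m}")
    case True
    then show ?thesis
      by (simp add: vec_mat_def lift_mat_def ones_vec_def sum.distrib algebra_simps)
  next
    case False
    then have "S i j = 0" for i using S by (simp add: mats_def)
    with False show ?thesis by (auto simp: vec_mat_def lift_mat_def ones_vec_def)
  qed
  finally show "vec_mat (Suc m) x (lift_mat m S c) j = \<dots>" .
qed

lemma lift_mat_fixes_ones: "vec_mat (Suc m) (ones_vec (Suc m)) (lift_mat m S c) = ones_vec (Suc m)"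
proof (rule ext)
  fix j
  have "vec_mat (Suc m) (ones_vec (Suc m)) (lift_mat m S c) j
      = (\<Sum>i\<in>{1..m}. lift_mat m S c i j) + lift_mat m S c (Suc m) j"
    by (simp add: vec_mat_def ones_vec_def)
  then show "vec_mat (Suc m) (ones_vec (Suc m)) (lift_mat m S c) j = ones_vec (Suc m) j"
    by (auto simp: lift_mat_def ones_vec_def sum.distrib)
qed

lemma vec_mat_lift_mat:
  assumes S: "S \<in> mats m" and u: "u \<in> vecs (Suc m)"
  shows "vec_mat (Suc m) u (lift_mat m S c)
       = (\<lambda>j. vec_mat m (proj_ones m u) S j
              + ((\<Sum>i\<in>{1..m}. proj_ones m u i * c i) + u (Suc m)) * ones_vec (Suc m) j)"
proof -
  have "vec_mat (Suc m) u (lift_mat m S c)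
      = vec_mat (Suc m) (\<lambda>i. proj_ones m u i + u (Suc m) * ones_vec (Suc m) i) (lift_mat m S c)"
    using proj_ones_decomp[OF u] by simp
  then show ?thesis
    by (simp add: vec_mat_add vec_mat_smult vec_mat_lift_mat_short[OF S proj_ones_vecs]
        lift_mat_fixes_ones algebra_simps)
qed

locale ones_radical = alternating_coeffs +
  fixes m :: nat
  assumes row_sum_zero: "a \<in> {1..Suc m} \<Longrightarrow> (\<Sum>b\<in>{1..Suc m}. A a b) = 0"
    and nondegenerate:
      "v \<in> vecs m \<Longrightarrow> (\<And>y. y \<in> vecs m \<Longrightarrow> polar_form A m v y = 0) \<Longrightarrow> v = (\<lambda>i. 0)"
begin

lemma col_sum_zero: "b \<in> {1..Suc m} \<Longrightarrow> (\<Sum>a\<in>{1..Suc m}. A a b) = 0"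
  using row_sum_zero[of b] by (simp add: coeff_sym[of _ b])

lemma polar_ones_left [simp]: "polar_form A (Suc m) (ones_vec (Suc m)) y = 0"
proof -
  have "polar_form A (Suc m) (ones_vec (Suc m)) y = (\<Sum>a\<in>{1..Suc m}. \<Sum>b\<in>{1..Suc m}. A a b * y b)"
    by (simp add: polar_form_def ones_vec_def)
  also have "\<dots> = (\<Sum>b\<in>{1..Suc m}. (\<Sum>a\<in>{1..Suc m}. A a b) * y b)"
    by (subst sum.swap) (simp only: sum_distrib_right)
  also have "\<dots> = 0" by (intro sum.neutral ballI) (simp only: col_sum_zero mult_zero_left)
  finally show ?thesis .
qed

lemma polar_form_add_ones:
  "polar_form A (Suc m) (\<lambda>i. v i + a * ones_vec (Suc m) i) (\<lambda>i. w i + b * ones_vec (Suc m) i)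
   = polar_form A (Suc m) v w"
  by (simp add: polar_form_add_left polar_form_add_right polar_form_smult_left
      polar_form_sym[of _ _ "\<lambda>i. b * ones_vec (Suc m) i"])

lemma quad_form_add_ones:
  "quad_form A (Suc m) (\<lambda>i. v i + a * ones_vec (Suc m) i)
   = quad_form A (Suc m) v + a * quad_form A (Suc m) (ones_vec (Suc m))"
  by (simp add: quad_form_add quad_form_smult polar_form_sym[of _ _ "\<lambda>i. a * ones_vec (Suc m) i"]
      polar_form_smult_left)

lemma radical_cases:
  assumes u: "u \<in> vecs (Suc m)" and rad: "\<And>y. y \<in> vecs (Suc m) \<Longrightarrow> polar_form A (Suc m) u y = 0"
  shows "u = (\<lambda>i. 0) \<or> u = ones_vec (Suc m)"
proof -
  have "polar_form A m (proj_ones m u) y = 0" if y: "y \<in> vecs m" for y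
  proof -
    have "polar_form A m (proj_ones m u) y = polar_form A (Suc m) (proj_ones m u) y"
      using polar_form_Suc[OF proj_ones_vecs y] by simp
    also have "\<dots> = polar_form A (Suc m)
        (\<lambda>i. proj_ones m u i + u (Suc m) * ones_vec (Suc m) i) (\<lambda>i. y i + 0 * ones_vec (Suc m) i)"
      by (simp only: polar_form_add_ones)
    also have "\<dots> = 0" using rad[OF vecs_Suc[OF y]] proj_ones_decomp[OF u] by simp
    finally show ?thesis .
  qed
  then have "proj_ones m u = (\<lambda>i. 0)" using nondegenerate[OF proj_ones_vecs] by blast
  then have "u = (\<lambda>i. u (Suc m) * ones_vec (Suc m) i)" using proj_ones_decomp[OF u] by simp
  then show ?thesis by (cases "u (Suc m)") auto
qed

lemma orth_fixes_ones:
  assumes M: "M \<in> carrier (orth_group A (Suc m))"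
  shows "vec_mat (Suc m) (ones_vec (Suc m)) M = ones_vec (Suc m)"
proof -
  let ?w = "vec_mat (Suc m) (ones_vec (Suc m)) M"
  have "polar_form A (Suc m) ?w y = 0" if y: "y \<in> vecs (Suc m)" for y
  proof -
    obtain x where x: "x \<in> vecs (Suc m)" "vec_mat (Suc m) x M = y"
      using invertible_vec_mat_surj[OF orth_groupD(2)[OF M] y] by blast
    show ?thesis
      using orth_preserves_polar[OF M ones_vec_vecs x(1)] x(2) by simp
  qed
  then have "?w = (\<lambda>i. 0) \<or> ?w = ones_vec (Suc m)"
    using radical_cases[OF vec_mat_vecs[OF orth_groupD(1)[OF M]]] by blast
  moreover have "?w \<noteq> (\<lambda>i. 0)"
  proof
    assume "?w = (\<lambda>i. 0)"
    then have "ones_vec (Suc m) = (\<lambda>i. 0)"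
      using invertible_vec_mat_cancel[OF orth_groupD(2)[OF M] ones_vec_vecs zero_vecs]
      by (simp add: vec_mat_zero)
    then have "ones_vec (Suc m) 1 = 0" by simp
    then show False by (simp add: ones_vec_def)
  qed
  ultimately show ?thesis by blast
qed

lemma orth_last_row:
  assumes M: "M \<in> carrier (orth_group A (Suc m))"
  shows "M (Suc m) j = ones_vec (Suc m) j + (\<Sum>k\<in>{1..m}. M k j)"
proof -
  have "ones_vec (Suc m) j = (\<Sum>k\<in>{1..m}. M k j) + M (Suc m) j"
    using fun_cong[OF orth_fixes_ones[OF M], of j] by (simp add: vec_mat_def ones_vec_def)
  then show ?thesis by (simp add: algebra_simps)
qed

lemma induced_mat_mult:
  assumes M: "M \<in> carrier (orth_group A (Suc m))" and N: "N \<in> carrier (orth_group A (Suc m))"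
  shows "induced_mat m (mat_mult (Suc m) M N) = mat_mult m (induced_mat m M) (induced_mat m N)"
proof (rule mats_eqI[OF induced_mat_mats mat_mult_mats[OF induced_mat_mats induced_mat_mats]])
  fix x assume x: "x \<in> vecs m"
  let ?u = "vec_mat (Suc m) x M"
  have u: "?u \<in> vecs (Suc m)" using vec_mat_vecs[OF orth_groupD(1)[OF M]] .
  have "vec_mat m x (mat_mult m (induced_mat m M) (induced_mat m N))
      = proj_ones m (vec_mat (Suc m) (proj_ones m ?u) N)"
    by (simp add: vec_mat_mult vec_mat_induced_mat[OF x] vec_mat_induced_mat[OF proj_ones_vecs])
  also have "proj_ones m ?u = (\<lambda>i. ?u i + ?u (Suc m) * ones_vec (Suc m) i)"
    by (rule proj_ones_eq[OF u])
  also have "proj_ones m (vec_mat (Suc m) (\<lambda>i. ?u i + ?u (Suc m) * ones_vec (Suc m) i) N)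
      = proj_ones m (vec_mat (Suc m) ?u N)"
    by (simp add: vec_mat_add vec_mat_smult orth_fixes_ones[OF N] proj_ones_add_ones)
  also have "\<dots> = vec_mat m x (induced_mat m (mat_mult (Suc m) M N))"
    by (simp add: vec_mat_induced_mat[OF x] vec_mat_mult)
  finally show "vec_mat m x (induced_mat m (mat_mult (Suc m) M N))
      = vec_mat m x (mat_mult m (induced_mat m M) (induced_mat m N))" by simp
qed

lemma induced_mat_invertible:
  assumes M: "M \<in> carrier (orth_group A (Suc m))"
  shows "mat_invertible m (induced_mat m M)"
proof -
  obtain M' where M': "M' \<in> carrier (orth_group A (Suc m))"
    "mat_mult (Suc m) M M' = mat_id (Suc m)" "mat_mult (Suc m) M' M = mat_id (Suc m)"
    using orth_group_inverse[OF M] by blast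
  then show ?thesis
    unfolding mat_invertible_def using induced_mat_mats
    by (metis induced_mat_id induced_mat_mult[OF M M'(1)] induced_mat_mult[OF M'(1) M])
qed

lemma polar_form_induced_mat:
  assumes M: "M \<in> carrier (orth_group A (Suc m))" and x: "x \<in> vecs m" and y: "y \<in> vecs m"
  shows "polar_form A m (vec_mat m x (induced_mat m M)) (vec_mat m y (induced_mat m M))
       = polar_form A m x y"
proof -
  let ?u = "vec_mat (Suc m) x M" and ?v = "vec_mat (Suc m) y M"
  have u: "?u \<in> vecs (Suc m)" and v: "?v \<in> vecs (Suc m)"
    using vec_mat_vecs[OF orth_groupD(1)[OF M]] by auto
  have "polar_form A m (vec_mat m x (induced_mat m M)) (vec_mat m y (induced_mat m M))
      = polar_form A (Suc m) (proj_ones m ?u) (proj_ones m ?v)"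
    by (simp add: vec_mat_induced_mat x y polar_form_Suc proj_ones_vecs)
  also have "\<dots> = polar_form A (Suc m)
      (\<lambda>i. proj_ones m ?u i + ?u (Suc m) * ones_vec (Suc m) i)
      (\<lambda>i. proj_ones m ?v i + ?v (Suc m) * ones_vec (Suc m) i)"
    by (simp only: polar_form_add_ones)
  also have "\<dots> = polar_form A (Suc m) ?u ?v"
    using proj_ones_decomp[OF u, symmetric] proj_ones_decomp[OF v, symmetric] by simp
  also have "\<dots> = polar_form A m x y"
    using orth_preserves_polar[OF M vecs_Suc[OF x] vecs_Suc[OF y]] polar_form_Suc[OF x y] by simp
  finally show ?thesis .
qed

lemma quad_form_induced_mat:
  assumes M: "M \<in> carrier (orth_group A (Suc m))" and x: "x \<in> vecs m"
  shows "quad_form A m (vec_mat m x (induced_mat m M))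
       + vec_mat (Suc m) x M (Suc m) * quad_form A (Suc m) (ones_vec (Suc m))
       = quad_form A m x"
proof -
  let ?u = "vec_mat (Suc m) x M"
  have u: "?u \<in> vecs (Suc m)" using vec_mat_vecs[OF orth_groupD(1)[OF M]] .
  have "quad_form A m x = quad_form A (Suc m) ?u"
    using quad_form_Suc[OF x] orth_groupD(3)[OF M vecs_Suc[OF x]] by simp
  also have "\<dots> = quad_form A (Suc m) (\<lambda>i. proj_ones m ?u i + ?u (Suc m) * ones_vec (Suc m) i)"
    using proj_ones_decomp[OF u] by simp
  also have "\<dots> = quad_form A m (vec_mat m x (induced_mat m M))
      + ?u (Suc m) * quad_form A (Suc m) (ones_vec (Suc m))"
    by (simp add: quad_form_add_ones vec_mat_induced_mat[OF x] quad_form_Suc[OF proj_ones_vecs])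
  finally show ?thesis by simp
qed

lemma orth_eqI:
  assumes M: "M \<in> carrier (orth_group A (Suc m))" and N: "N \<in> carrier (orth_group A (Suc m))"
    and ind: "induced_mat m M = induced_mat m N" and col: "last_col m M = last_col m N"
  shows "M = N"
proof -
  have col': "M i (Suc m) = N i (Suc m)" if "i \<in> {1..m}" for i
    using fun_cong[OF col, of i] that by (simp add: last_col_def)
  have out: "M i j = N i j" if "i \<notin> {1..Suc m} \<or> j \<notin> {1..Suc m}" for i j
    using that orth_groupD(1)[OF M] orth_groupD(1)[OF N] by (auto simp: mats_def)
  have top: "M i j = N i j" if i: "i \<in> {1..m}" for i j
  proof -
    consider "j \<in> {1..m}" | "j = Suc m" | "j \<notin> {1..Suc m}" by (auto simp: le_Suc_eq)
    then show ?thesis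
    proof cases
      case 1
      then have "M i j + M i (Suc m) = N i j + N i (Suc m)"
        using fun_cong[OF fun_cong[OF ind, of i], of j] i by (simp add: induced_mat_def)
      then show ?thesis using col'[OF i] by simp
    qed (use col'[OF i] out in auto)
  qed
  have last: "M (Suc m) j = N (Suc m) j" for j
  proof -
    have "(\<Sum>k\<in>{1..m}. M k j) = (\<Sum>k\<in>{1..m}. N k j)" using top by (intro sum.cong) auto
    then show ?thesis using orth_last_row[OF M, of j] orth_last_row[OF N, of j] by simp
  qed
  show ?thesis
  proof (intro ext)
    fix i j
    consider "i \<in> {1..m}" | "i = Suc m" | "i \<notin> {1..Suc m}" by (auto simp: le_Suc_eq)
    then show "M i j = N i j" by cases (use top last out in auto)
  qed
qed

lemma lift_mat_orth:
  assumes S: "S \<in> mats m" "mat_invertible m S" and c: "c \<in> vecs m"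
    and quad: "\<And>x. x \<in> vecs m \<Longrightarrow>
       quad_form A m (vec_mat m x S) + (\<Sum>i\<in>{1..m}. x i * c i) * quad_form A (Suc m) (ones_vec (Suc m))
       = quad_form A m x"
  shows "lift_mat m S c \<in> carrier (orth_group A (Suc m))"
proof -
  let ?M = "lift_mat m S c" and ?q = "quad_form A (Suc m) (ones_vec (Suc m))"
  have xS: "vec_mat m x S \<in> vecs m" for x using vec_mat_vecs[OF S(1)] .
  have "quad_form A (Suc m) (vec_mat (Suc m) u ?M) = quad_form A (Suc m) u"
    if u: "u \<in> vecs (Suc m)" for u
  proof -
    let ?x = "proj_ones m u" and ?t = "u (Suc m)"
    have "quad_form A (Suc m) (vec_mat (Suc m) u ?M)
        = quad_form A (Suc m) (vec_mat m ?x S) + ((\<Sum>i\<in>{1..m}. ?x i * c i) + ?t) * ?q"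
      by (simp only: vec_mat_lift_mat[OF S(1) u] quad_form_add_ones)
    also have "\<dots> = (quad_form A m (vec_mat m ?x S) + (\<Sum>i\<in>{1..m}. ?x i * c i) * ?q) + ?t * ?q"
      by (simp add: quad_form_Suc[OF xS] algebra_simps)
    also have "\<dots> = quad_form A m ?x + ?t * ?q" by (simp only: quad[OF proj_ones_vecs])
    also have "\<dots> = quad_form A (Suc m) (\<lambda>i. ?x i + ?t * ones_vec (Suc m) i)"
      by (simp only: quad_form_add_ones quad_form_Suc[OF proj_ones_vecs])
    also have "\<dots> = quad_form A (Suc m) u" using proj_ones_decomp[OF u] by simp
    finally show ?thesis .
  qed
  moreover have "mat_invertible (Suc m) ?M"
  proof (rule mat_invertibleI[OF lift_mat_mats])
    fix u assume u: "u \<in> vecs (Suc m)" and ker: "vec_mat (Suc m) u ?M = (\<lambda>j. 0)"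
    let ?x = "proj_ones m u" and ?t = "u (Suc m)"
    have "vec_mat m ?x S = proj_ones m (vec_mat (Suc m) u ?M)"
      by (simp only: vec_mat_lift_mat[OF S(1) u] proj_ones_add_ones proj_ones_id[OF xS])
    also have "\<dots> = (\<lambda>j. 0)" by (rule ext) (simp add: ker proj_ones_def)
    finally have "vec_mat m ?x S = vec_mat m (\<lambda>j. 0) S" by (simp add: vec_mat_zero)
    then have x0: "?x = (\<lambda>j. 0)"
      by (rule invertible_vec_mat_cancel[OF S(2) proj_ones_vecs zero_vecs])
    have "vec_mat m ?x S (Suc m) = 0" using xS[of ?x] by (simp add: vecs_def)
    then have "?t = 0"
      using fun_cong[OF ker, of "Suc m"]
      by (simp add: vec_mat_lift_mat[OF S(1) u] x0 ones_vec_def)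
    then show "u = (\<lambda>j. 0)" using proj_ones_decomp[OF u] x0 by simp
  qed
  ultimately show ?thesis using lift_mat_mats by (simp add: orth_group_def)
qed

lemma last_col_quad:
  assumes M: "M \<in> carrier (orth_group A (Suc m))" and i: "i \<in> {1..m}"
  shows "quad_form A m (vec_mat m (unit_vec i) (induced_mat m M))
       + M i (Suc m) * quad_form A (Suc m) (ones_vec (Suc m)) = quad_form A m (unit_vec i)"
proof -
  have "vec_mat (Suc m) (unit_vec i) M (Suc m) = M i (Suc m)"
    using i by (simp add: vec_mat_unit)
  then show ?thesis using quad_form_induced_mat[OF M unit_vec_vecs[OF i]] by simp
qed

theorem orth_iso_symp:
  assumes q: "quad_form A (Suc m) (ones_vec (Suc m)) = 1"
  shows "induced_mat m \<in> iso (orth_group A (Suc m)) (symp_group A m)"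
proof -
  let ?O = "orth_group A (Suc m)" and ?Sp = "symp_group A m"
  have into: "induced_mat m M \<in> carrier ?Sp" if M: "M \<in> carrier ?O" for M
    using induced_mat_mats induced_mat_invertible[OF M] polar_form_induced_mat[OF M]
    by (simp add: symp_group_def)
  have inj: "inj_on (induced_mat m) (carrier ?O)"
  proof (rule inj_onI)
    fix M N assume M: "M \<in> carrier ?O" and N: "N \<in> carrier ?O" and eq: "induced_mat m M = induced_mat m N"
    have "M i (Suc m) = N i (Suc m)" if "i \<in> {1..m}" for i
    proof -
      have "quad_form A m (vec_mat m (unit_vec i) (induced_mat m N)) + M i (Suc m)
          = quad_form A m (vec_mat m (unit_vec i) (induced_mat m N)) + N i (Suc m)"
        using last_col_quad[OF M that] last_col_quad[OF N that] by (simp add: eq q)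
      then show ?thesis by simp
    qed
    then have "last_col m M = last_col m N" by (simp add: last_col_def fun_eq_iff)
    then show "M = N" by (rule orth_eqI[OF M N eq])
  qed
  have onto: "S \<in> induced_mat m ` carrier ?O" if S: "S \<in> carrier ?Sp" for S
  proof -
    have Sm: "S \<in> mats m" and Si: "mat_invertible m S"
      and polar: "\<And>x y. x \<in> vecs m \<Longrightarrow> y \<in> vecs m \<Longrightarrow>
          polar_form A m (vec_mat m x S) (vec_mat m y S) = polar_form A m x y"
      using S by (auto simp: symp_group_def)
    define g where "g x = quad_form A m (vec_mat m x S) + quad_form A m x" for x
    define c where "c = (\<lambda>i. if i \<in> {1..m} then g (unit_vec i) else 0)"
    have g_add: "g (\<lambda>i. x i + y i) = g x + g y" if "x \<in> vecs m" "y \<in> vecs m" for x y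
      using polar[OF that] by (simp add: g_def vec_mat_add quad_form_add algebra_simps)
    have c: "c \<in> vecs m" by (simp add: c_def vecs_def)
    have "(\<Sum>i\<in>{1..m}. x i * c i) = g x" if x: "x \<in> vecs m" for x
    proof -
      have "(\<Sum>i\<in>{1..m}. x i * c i) = (\<Sum>i\<in>{1..m}. x i * g (unit_vec i))"
        by (intro sum.cong) (simp_all add: c_def)
      also have "\<dots> = g x" by (rule additive_eq_sum_unit[where g = g, OF g_add x, symmetric])
      finally show ?thesis .
    qed
    then have "lift_mat m S c \<in> carrier ?O"
      by (intro lift_mat_orth[OF Sm Si c]) (simp add: q g_def)
    then show ?thesis by (rule rev_image_eqI) (simp add: induced_lift_mat[OF Sm])
  qed
  show ?thesis
    unfolding iso_def bij_betw_def
    using into induced_mat_mult inj onto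
    by (auto simp: hom_def orth_group_def symp_group_def)
qed

lemma induced_mat_orth:
  assumes q: "quad_form A (Suc m) (ones_vec (Suc m)) = 0" and M: "M \<in> carrier (orth_group A (Suc m))"
  shows "induced_mat m M \<in> carrier (orth_group A m)"
  using induced_mat_mats induced_mat_invertible[OF M] quad_form_induced_mat[OF M] q
  by (simp add: orth_group_def)

lemma last_col_mult:
  assumes M: "M \<in> carrier (orth_group A (Suc m))" and N: "N \<in> carrier (orth_group A (Suc m))"
  shows "last_col m (mat_mult (Suc m) M N)
       = (\<lambda>i. last_col m M i + mat_vec m (induced_mat m M) (last_col m N) i)"
proof (rule ext)
  fix i
  show "last_col m (mat_mult (Suc m) M N) i = last_col m M i + mat_vec m (induced_mat m M) (last_col m N) i"
  proof (cases "i \<in> {1..m}")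
    case True
    have "mat_vec m (induced_mat m M) (last_col m N) i
        = (\<Sum>j\<in>{1..m}. (M i j + M i (Suc m)) * N j (Suc m))"
      using True by (auto simp: mat_vec_def induced_mat_def last_col_def intro!: sum.cong)
    also have "\<dots> = (\<Sum>j\<in>{1..m}. M i j * N j (Suc m)) + M i (Suc m) * (\<Sum>j\<in>{1..m}. N j (Suc m))"
      by (simp add: algebra_simps sum.distrib sum_distrib_left)
    finally have "mat_vec m (induced_mat m M) (last_col m N) i = \<dots>" .
    moreover have "N (Suc m) (Suc m) = 1 + (\<Sum>j\<in>{1..m}. N j (Suc m))"
      using orth_last_row[OF N, of "Suc m"] by (simp add: ones_vec_def)
    ultimately show ?thesis
      using True by (simp add: last_col_def mat_mult_def algebra_simps)
  qed (auto simp: last_col_def mat_vec_def)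
qed

theorem orth_iso_semidirect:
  assumes q: "quad_form A (Suc m) (ones_vec (Suc m)) = 0"
  shows "(\<lambda>M. (last_col m M, induced_mat m M))
       \<in> iso (orth_group A (Suc m)) (semidirect_prod (vec_group m) (orth_group A m) (col_action m))"
proof -
  let ?O = "orth_group A (Suc m)" and ?H = "semidirect_prod (vec_group m) (orth_group A m) (col_action m)"
  let ?split = "\<lambda>M. (last_col m M, induced_mat m M)"
  have carrier_H: "carrier ?H = vecs m \<times> carrier (orth_group A m)"
    by (simp add: semidirect_prod_def vec_group_def)
  have last_col_vecs: "last_col m M \<in> vecs m" for M
    by (simp add: last_col_def vecs_def)
  have into: "?split \<in> carrier ?O \<rightarrow> carrier ?H"
    using induced_mat_orth[OF q] last_col_vecs by (auto simp: carrier_H)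
  moreover have "?split (M \<otimes>\<^bsub>?O\<^esub> N) = ?split M \<otimes>\<^bsub>?H\<^esub> ?split N"
    if M: "M \<in> carrier ?O" and N: "N \<in> carrier ?O" for M N
    using last_col_mult[OF M N] induced_mat_mult[OF M N] last_col_vecs[of N]
    by (simp add: semidirect_prod_def vec_group_def orth_group_def col_action_def)
  ultimately have hom: "?split \<in> hom ?O ?H" by (simp add: hom_def)
  have inj: "inj_on ?split (carrier ?O)"
    by (rule inj_onI) (use orth_eqI in blast)
  have onto: "p \<in> ?split ` carrier ?O" if "p \<in> carrier ?H" for p
  proof -
    obtain c S where p: "p = (c, S)" and c: "c \<in> vecs m" and S: "S \<in> carrier (orth_group A m)"
      using \<open>p \<in> carrier ?H\<close> carrier_H by auto
    have "lift_mat m S c \<in> carrier ?O"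
      using S by (intro lift_mat_orth[OF orth_groupD(1,2)[OF S] c]) (simp add: q orth_groupD(3))
    moreover have "?split (lift_mat m S c) = p"
      using p c by (simp add: last_col_lift_mat induced_lift_mat[OF orth_groupD(1)[OF S]])
    ultimately show ?thesis by force
  qed
  have "?split ` carrier ?O = carrier ?H" using into onto by blast
  then show ?thesis unfolding iso_def bij_betw_def using hom inj by blast
qed

end

section \<open>The permutations tau and sigma\<close>

definition low_row :: "family \<Rightarrow> nat list" where
  "low_row f = (case f of Tau \<Rightarrow> [3,2,5,4,1] | Sigma \<Rightarrow> [3,2,7,6,5,4,1])"

definition block :: "family \<Rightarrow> nat set" where
  "block f = (case f of Tau \<Rightarrow> {4,5} | Sigma \<Rightarrow> {4,5,6,7})"

text \<open>By Omega_mod2 below, crossing f is Omega mod 2: distinct letters form an inversion of tau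
  or sigma unless one of them is 2 or 3 and the other lies in block f.\<close>
definition noncrossing :: "family \<Rightarrow> nat \<Rightarrow> nat set" where
  "noncrossing f a = (if a \<in> {2,3} then block f else if a \<in> block f then {2,3} else {})"

definition crossing :: "family \<Rightarrow> nat \<Rightarrow> nat \<Rightarrow> bit" where
  "crossing f a b = (if a = b \<or> b \<in> noncrossing f a then 0 else 1)"

lemma pos_eq:
  assumes "distinct L" "i < length L" "L ! i = a"
  shows "pos L a = Suc i"
proof -
  have "(LEAST j. j < length L \<and> L ! j = a) = i"
    by (rule Least_equality) (use assms nth_eq_iff_index_eq in \<open>auto intro: leI\<close>)
  then show ?thesis by (simp add: pos_def)
qed

lemma pos_Cons:
  assumes "a \<in> set (x # xs)"
  shows "pos (x # xs) a = (if x = a then 1 else Suc (pos xs a))"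
proof (cases "x = a")
  case True
  then show ?thesis by (simp add: pos_def Least_equality)
next
  case False
  with assms obtain j where "j < length xs" "xs ! j = a" by (auto simp: in_set_conv_nth)
  then have "(LEAST i. i < length (x # xs) \<and> (x # xs) ! i = a)
      = Suc (LEAST i. i < length xs \<and> xs ! i = a)"
    using False by (subst Least_Suc[of _ "Suc j"]) simp_all
  with False show ?thesis by (simp add: pos_def)
qed

lemma pos_append_left: "a \<in> set xs \<Longrightarrow> pos (xs @ ys) a = pos xs a"
  by (induction xs) (auto simp: pos_Cons)

lemma pos_append_right:
  "a \<notin> set xs \<Longrightarrow> a \<in> set ys \<Longrightarrow> pos (xs @ ys) a = length xs + pos ys a"
  by (induction xs) (auto simp: pos_Cons)

lemma pos_upt: "k \<le> a \<Longrightarrow> a < n \<Longrightarrow> pos [k..<n] a = Suc (a - k)"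
  by (rule pos_eq) simp_all

lemma pos_rev_upt: "k \<le> a \<Longrightarrow> a \<le> n \<Longrightarrow> pos (rev [k..<Suc n]) a = Suc n - a"
proof (induction n)
  case (Suc n)
  have "rev [k..<Suc (Suc n)] = Suc n # rev [k..<Suc n]"
    using Suc.prems by (simp add: upt_Suc_append del: upt_Suc)
  then show ?case
    using Suc by (cases "a = Suc n") (simp_all add: pos_Cons del: upt_Suc)
qed (simp add: pos_Cons)

lemma pi_t_eq: "a \<in> {1..n} \<Longrightarrow> pi_t n a = a"
  by (simp add: pi_t_def top_row_def pos_upt del: upt_Suc)

lemma bot_row_eq: "bot_row f n = rev [fam_min f..<Suc n] @ low_row f"
  by (cases f) (simp_all add: bot_row_def low_row_def fam_min_def del: upt_Suc)

lemma set_low_row: "set (low_row f) = {1..<fam_min f}"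
  by (cases f) (auto simp: low_row_def fam_min_def)

lemma pi_b_high: "fam_min f \<le> a \<Longrightarrow> a \<le> n \<Longrightarrow> pi_b f n a = Suc n - a"
  by (simp add: pi_b_def bot_row_eq pos_append_left pos_rev_upt del: upt_Suc)

lemma pi_b_low:
  assumes "a \<in> {1..<fam_min f}" "fam_min f \<le> n"
  shows "pi_b f n a = Suc n - fam_min f + pos (low_row f) a"
  using assms by (simp add: pi_b_def bot_row_eq pos_append_right set_low_row del: upt_Suc)

lemma noncrossing_subset: "noncrossing f a \<subseteq> {2..<fam_min f}"
  by (cases f) (auto simp: noncrossing_def block_def fam_min_def)

lemma noncrossing_high: "fam_min f \<le> a \<Longrightarrow> noncrossing f a = {}"
  by (cases f) (auto simp: noncrossing_def block_def fam_min_def)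

lemma noncrossing_sym: "b \<in> noncrossing f a \<longleftrightarrow> a \<in> noncrossing f b"
  by (cases f) (auto simp: noncrossing_def block_def)

lemma noncrossing_irrefl: "a \<notin> noncrossing f a"
  by (cases f) (auto simp: noncrossing_def block_def)

lemma even_card_noncrossing: "even (card (noncrossing f a))"
  by (cases f) (auto simp: noncrossing_def block_def)

lemma low_row_inversion_iff:
  assumes "a \<in> {1..<fam_min f}" "b \<in> {1..<fam_min f}"
  shows "(a < b \<and> pos (low_row f) b < pos (low_row f) a) \<or> (b < a \<and> pos (low_row f) a < pos (low_row f) b)
     \<longleftrightarrow> a \<noteq> b \<and> b \<notin> noncrossing f a"
proof (cases f)
  case Tau
  have p: "pos (low_row Tau) 3 = 1" "pos (low_row Tau) 2 = 2" "pos (low_row Tau) 5 = 3"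
    "pos (low_row Tau) 4 = 4" "pos (low_row Tau) (Suc 0) = 5"
    by (simp_all add: low_row_def pos_Cons)
  have "a \<in> {1,2,3,4,5}" "b \<in> {1,2,3,4,5}" using assms Tau by (auto simp: fam_min_def)
  then show ?thesis
    using Tau by (elim insertE emptyE) (simp_all add: p noncrossing_def block_def)
next
  case Sigma
  have p: "pos (low_row Sigma) 3 = 1" "pos (low_row Sigma) 2 = 2" "pos (low_row Sigma) 7 = 3"
    "pos (low_row Sigma) 6 = 4" "pos (low_row Sigma) 5 = 5" "pos (low_row Sigma) 4 = 6"
    "pos (low_row Sigma) (Suc 0) = 7"
    by (simp_all add: low_row_def pos_Cons)
  have "a \<in> {1,2,3,4,5,6,7}" "b \<in> {1,2,3,4,5,6,7}" using assms Sigma by (auto simp: fam_min_def)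
  then show ?thesis
    using Sigma by (elim insertE emptyE) (simp_all add: p noncrossing_def block_def)
qed

lemma inversion_iff:
  assumes n: "fam_min f \<le> n" and a: "a \<in> {1..n}" and b: "b \<in> {1..n}"
  shows "(a < b \<and> pi_b f n b < pi_b f n a) \<or> (b < a \<and> pi_b f n a < pi_b f n b)
     \<longleftrightarrow> a \<noteq> b \<and> b \<notin> noncrossing f a"
proof -
  have pos_pos: "0 < pos L x" for L x by (simp add: pos_def)
  consider "fam_min f \<le> a" "fam_min f \<le> b" | "a < fam_min f" "fam_min f \<le> b"
    | "fam_min f \<le> a" "b < fam_min f" | "a < fam_min f" "b < fam_min f" by linarith
  then show ?thesis
  proof cases
    case 1
    then show ?thesis using a b by (auto simp: pi_b_high noncrossing_high)
  next
    case 2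
    then have "b \<notin> noncrossing f a" using noncrossing_subset by fastforce
    then show ?thesis
      using 2 a b n pos_pos[of "low_row f" a] by (auto simp: pi_b_high pi_b_low)
  next
    case 3
    then show ?thesis
      using a b n pos_pos[of "low_row f" b] by (auto simp: pi_b_high pi_b_low noncrossing_high)
  next
    case 4
    then show ?thesis
      using a b n low_row_inversion_iff[of a f b] by (auto simp: pi_b_low)
  qed
qed

lemma Omega_mod2:
  assumes "fam_min f \<le> n" "a \<in> {1..n}" "b \<in> {1..n}"
  shows "(of_int (Omega f n a b) :: bit) = crossing f a b"
  using inversion_iff[OF assms] assms(2,3) by (auto simp: Omega_def crossing_def pi_t_eq)

lemma crossing_alternating: "alternating_coeffs (crossing f)"
  by unfold_locales (auto simp: crossing_def noncrossing_sym)

lemma crossing_split: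
  "crossing f a b = 1 + (if b = a then 1 else 0) + (if b \<in> noncrossing f a then 1 else 0)"
  using noncrossing_irrefl[of a f] by (auto simp: crossing_def)

lemma noncrossing_range: "fam_min f \<le> n \<Longrightarrow> noncrossing f a \<subseteq> {1..n}"
  using noncrossing_subset by fastforce

lemma crossing_row_sum:
  assumes "fam_min f \<le> n" "a \<in> {1..n}"
  shows "(\<Sum>b\<in>{1..n}. crossing f a b) = of_nat n + 1"
proof -
  have "(\<Sum>b\<in>{1..n}. crossing f a b) = (\<Sum>b\<in>{1..n}. 1) + (\<Sum>b\<in>{1..n}. if b = a then 1 else 0)
      + (\<Sum>b\<in>{1..n}. if b \<in> noncrossing f a then 1 else 0)"
    by (simp add: crossing_split sum.distrib)
  also have "(\<Sum>b\<in>{1..n}. if b \<in> noncrossing f a then (1::bit) else 0) = (\<Sum>b\<in>{1..n} \<inter> noncrossing f a. 1)"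
    by (simp add: sum.inter_restrict[symmetric])
  also have "{1..n} \<inter> noncrossing f a = noncrossing f a" using noncrossing_range[OF assms(1)] by blast
  also have "(\<Sum>b\<in>noncrossing f a. (1::bit)) = 0"
    using even_card_noncrossing[of f a] by (simp add: of_nat_bit)
  finally show ?thesis using assms(2) by simp
qed

lemma crossing_nondegenerate:
  assumes m: "fam_min f \<le> m" "even m" and v: "v \<in> vecs m"
    and rad: "\<And>y. y \<in> vecs m \<Longrightarrow> polar_form (crossing f) m v y = 0"
  shows "v = (\<lambda>i. 0)"
proof -
  have total: "(\<Sum>a\<in>{1..m}. v a) = 0"
  proof -
    have "polar_form (crossing f) m v (ones_vec m) = (\<Sum>a\<in>{1..m}. v a * (\<Sum>b\<in>{1..m}. crossing f a b))"
      by (simp add: polar_form_def ones_vec_def sum_distrib_left)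
    also have "\<dots> = (\<Sum>a\<in>{1..m}. v a)"
      using crossing_row_sum[OF m(1)] m(2) by (intro sum.cong refl) (simp add: of_nat_bit)
    finally show ?thesis using rad[OF ones_vec_vecs] by simp
  qed
  \<comment> \<open>testing against a unit vector and subtracting the total leaves a local relation\<close>
  have local: "v b = (\<Sum>a\<in>noncrossing f b. v a)" if b: "b \<in> {1..m}" for b
  proof -
    have "0 = (\<Sum>a\<in>{1..m}. v a * crossing f a b)"
      using rad[OF unit_vec_vecs[OF b]] polar_form_unit_right[OF b] by simp
    also have "\<dots> = (\<Sum>a\<in>{1..m}. v a) + (\<Sum>a\<in>{1..m}. if a = b then v a else 0)
        + (\<Sum>a\<in>{1..m}. if a \<in> noncrossing f b then v a else 0)"
    proof -
      have "v a * crossing f a b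
          = v a + (if a = b then v a else 0) + (if a \<in> noncrossing f b then v a else 0)" for a
        unfolding crossing_split using noncrossing_sym[of b f a] by (auto simp: algebra_simps)
      then show ?thesis by (simp add: sum.distrib)
    qed
    also have "(\<Sum>a\<in>{1..m}. if a \<in> noncrossing f b then v a else 0) = (\<Sum>a\<in>noncrossing f b. v a)"
      using noncrossing_range[OF m(1)] by (simp add: sum.inter_restrict[symmetric] Int_absorb1)
    finally show ?thesis using total b by (simp add: bit_add_eq_0_iff)
  qed
  have range: "{2, 3} \<union> block f \<subseteq> {1..m}"
    using m(1) by (cases f) (auto simp: block_def fam_min_def)
  have "v 2 = v 3" using local[of 2] local[of 3] range by (simp add: noncrossing_def)
  then have block0: "v b = 0" if "b \<in> block f" for b
    using local[of b] that range by (auto simp: noncrossing_def block_def split: family.splits)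
  then have "v 2 = 0" "v 3 = 0" using local[of 2] local[of 3] range by (simp_all add: noncrossing_def)
  show ?thesis
  proof
    fix i
    show "v i = 0"
    proof (cases "i \<in> {1..m}")
      case True
      then show ?thesis using local[of i] block0 \<open>v 2 = 0\<close> \<open>v 3 = 0\<close>
        by (auto simp: noncrossing_def split: if_splits)
    qed (use v in \<open>simp add: vecs_def\<close>)
  qed
qed

lemma crossing_ones_radical:
  assumes "fam_min f \<le> m" "even m"
  shows "ones_radical (crossing f) m"
proof (intro ones_radical.intro ones_radical_axioms.intro crossing_alternating)
  show "(\<Sum>b\<in>{1..Suc m}. crossing f a b) = 0" if "a \<in> {1..Suc m}" for a
    using crossing_row_sum[OF _ that] assms by (simp add: of_nat_bit)
qed (use crossing_nondegenerate[OF assms] in blast)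

lemma quad_form_crossing_ones:
  assumes "fam_min f \<le> n"
  shows "quad_form (crossing f) n (ones_vec n) = of_nat (n * (n + 1) div 2)"
  using assms
proof (induction n rule: dec_induct)
  case base
  have "quad_form (crossing Tau) 6 (ones_vec 6) = 1" "quad_form (crossing Sigma) 8 (ones_vec 8) = 0"
    by (simp_all add: quad_form_def ones_vec_def crossing_def noncrossing_def block_def numeral_eq_Suc)
  then show ?case by (cases f) (simp_all add: fam_min_def of_nat_bit)
next
  case (step k)
  interpret alternating_coeffs "crossing f" by (rule crossing_alternating)
  have ones: "ones_vec (Suc k) = (\<lambda>i. ones_vec k i + unit_vec (Suc k) i)"
    by (auto simp: ones_vec_def unit_vec_def)
  have "Suc k \<notin> noncrossing f a" for a
    using noncrossing_subset[of f a] step.hyps by auto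
  then have "polar_form (crossing f) (Suc k) (ones_vec k) (unit_vec (Suc k)) = (\<Sum>a\<in>{1..k}. 1)"
    by (simp add: polar_form_unit_right ones_vec_def crossing_def)
  moreover have "(Suc k) * (Suc k + 1) div 2 = k * (k + 1) div 2 + Suc k"
    by (simp add: algebra_simps)
  ultimately show ?case
    using step.IH by (simp add: ones quad_form_add quad_form_Suc[OF ones_vec_vecs] quad_form_unit)
qed

lemma quad_form_crossing_ones_mod4:
  assumes "fam_min f \<le> n" "odd n"
  shows "quad_form (crossing f) n (ones_vec n) = (if n mod 4 = 1 then 1 else 0)"
proof -
  obtain r where r: "n = 2 * r + 1" using assms(2) oddE by blast
  have "n * (n + 1) div 2 = (2 * r + 1) * (r + 1)" by (simp add: r algebra_simps)
  moreover have "n mod 4 = 1 \<longleftrightarrow> even r" by (simp add: r) presburger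
  ultimately show ?thesis by (simp add: quad_form_crossing_ones[OF assms(1)] of_nat_bit)
qed

lemma O_group_eq:
  assumes n: "fam_min f \<le> n"
  shows "O_group f n = orth_group (crossing f) n"
proof -
  have "Qform f n = quad_form (crossing f) n"
    unfolding Qform_def quad_form_def
    by (intro ext arg_cong2[where f = "(+)"] sum.cong refl) (auto simp: pi_t_eq Omega_mod2[OF n])
  then show ?thesis by (simp add: O_group_def orth_group_def)
qed

lemma Sp_group_eq:
  assumes n: "fam_min f \<le> n"
  shows "Sp_group f n = symp_group (crossing f) n"
proof -
  have OB: "OmegaBar f n \<in> mats n" by (simp add: OmegaBar_def mats_def)
  have "polar_form (OmegaBar f n) n = polar_form (crossing f) n"
    by (rule polar_form_cong) (simp add: OmegaBar_def Omega_mod2[OF n])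
  then show ?thesis
    unfolding Sp_group_def symp_group_def by (auto simp: congruence_iff_isometry[OF _ OB])
qed

theorem lemma5p3:
  fixes f :: family and d :: nat
  assumes "odd d" and "d \<ge> 7" and "fam_min f \<le> d - 1"
  shows "(d mod 4 = 1 \<longrightarrow> O_group f d \<cong> Sp_group f (d - 1))
       \<and> (d mod 4 = 3 \<longrightarrow>
            (\<exists>\<phi>. \<phi> \<in> hom (O_group f (d - 1)) (AutoGroup (vec_group (d - 1)))
                 \<and> O_group f d \<cong> semidirect_prod (vec_group (d - 1)) (O_group f (d - 1)) \<phi>))"
proof -
  obtain m where d: "d = Suc m" using assms(2) by (cases d) auto
  have m: "fam_min f \<le> m" "even m" using assms d by auto
  interpret ones_radical "crossing f" m by (rule crossing_ones_radical[OF m])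
  have groups: "O_group f d = orth_group (crossing f) (Suc m)"
    "O_group f (d - 1) = orth_group (crossing f) m" "Sp_group f (d - 1) = symp_group (crossing f) m"
    using m(1) by (simp_all add: d O_group_eq Sp_group_eq)
  have q: "quad_form (crossing f) (Suc m) (ones_vec (Suc m)) = (if d mod 4 = 1 then 1 else 0)"
    using quad_form_crossing_ones_mod4[of f "Suc m"] m assms(1) d by simp
  show ?thesis
    unfolding groups
    using is_isoI[OF orth_iso_symp] is_isoI[OF orth_iso_semidirect] col_action_hom q
    by (auto simp: d intro: exI[where x = "col_action m"])
qed

end
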